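(* For every integer $n\ge 0$, as polynomials in $u$, $$P_{n+1}(u;0,1)=\frac{u}{2^n}\,S_n\!\left(u;0,1,-\tfrac12\right).$$ In particular, all coefficients of the polynomial $2^{-n}S_n(u;0,1,-\tfrac12)$ are integers.
   Context: Eulerian numbers: $\left\langle {n\atop k}\right\rangle$ is the number of permutations of $\{1,\dots,n\}$ with exactly $k$ ascents (indices $j$ with $a_j<a_{j+1}$). Define $P_1(u;a,b)=u-a$ and, for $n\ge1$, $P_{n+1}(u;a,b)=\sum_{k=0}^{n-1}\left\langle {n\atop k}\right\rangle (u-a)^{k+1}(u-b)^{n-k}$. The MacMahon numbers $M_{n,k}$ ($n\ge1$, $1\le k\le n$) are defined by $M_{n,1}=1$ and, for $n\ge 2$, $2\le k\le n$, $M_{n,k}=(2k-1)M_{n-1,k}+(2n-2k+1)M_{n-1,k-1}$, with $M_{n-1,n}=0$. Define $Q_n(u;a,b)=\sum_{k=1}^{n+1}M_{n+1,k}(u-a)^{n+1-k}(u-b)^{k-1}$ and $S_n(u;a,b,d)=\sum_{k=0}^{n}\binom{n}{k}(2d)^kQ_{n-k}(u;a,b)$. *)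

theory Defs
  imports Complex_Main "HOL-Computational_Algebra.Polynomial"
begin

definition ascents :: "nat list \<Rightarrow> nat" where
  "ascents xs = card {j. Suc j < length xs \<and> xs ! j < xs ! Suc j}"

definition eulerian :: "nat \<Rightarrow> nat \<Rightarrow> nat" where
  "eulerian n k = card {xs. distinct xs \<and> set xs = {1..n} \<and> ascents xs = k}"

text \<open>P n a b is the polynomial P_n(u;a,b) in the variable u (defined for n \<ge> 1; P 0 = 0 is a dummy).\<close>

fun Ppoly :: "nat \<Rightarrow> real \<Rightarrow> real \<Rightarrow> real poly" where
  "Ppoly 0 a b = 0"
| "Ppoly (Suc 0) a b = [:-a, 1:]"
| "Ppoly (Suc (Suc m)) a b =
     (\<Sum>k=0..m. of_nat (eulerian (Suc m) k) * [:-a, 1:] ^ (k + 1) * [:-b, 1:] ^ (Suc m - k))"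

text \<open>MacMahon numbers M n k for 1 \<le> k \<le> n; the value is 0 outside this range
  (in particular M_{n-1,n} = 0).\<close>

fun macmahon :: "nat \<Rightarrow> nat \<Rightarrow> nat" where
  "macmahon 0 k = 0"
| "macmahon (Suc m) k =
     (if k = 0 \<or> k > Suc m then 0
      else if k = 1 then 1
      else (2 * k - 1) * macmahon m k + (2 * Suc m - 2 * k + 1) * macmahon m (k - 1))"

definition Qpoly :: "nat \<Rightarrow> real \<Rightarrow> real \<Rightarrow> real poly" where
  "Qpoly n a b = (\<Sum>k=1..n+1. of_nat (macmahon (n+1) k) * [:-a, 1:] ^ (n + 1 - k) * [:-b, 1:] ^ (k - 1))"

definition Spoly :: "nat \<Rightarrow> real \<Rightarrow> real \<Rightarrow> real \<Rightarrow> real poly" where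
  "Spoly n a b d = (\<Sum>k=0..n. of_nat (n choose k) * [:(2 * d) ^ k:] * Qpoly (n - k) a b)"

end

theory Submission
  imports Defs "HOL-Combinatorics.Multiset_Permutations"
begin

text \<open>Inserting the maximum n + 1 into one of the n + 1 gaps of a permutation of {1..n} gives
  the Eulerian recurrence E(n+1,k) = (k+1) E(n,k) + (n+1-k) E(n,k-1), which amounts to
  P(n+2) = (u-a)(u-b) P(n+1)'. The MacMahon recurrence likewise says
  Q(n+1) = 2(u-a)(u-b) Q(n)' + (2u-a-b) Q(n), and since S(n) is the binomial transform of the Q(n)
  it satisfies S(n+1) = 2(u-a)(u-b) S(n)' + (2u-a-b+2d) S(n). For d = (a-b)/2 the last factor is
  2(u-b), and induction on n gives P(n+1) = (u-a) 2^-n S(n) for all a, b; the theorem is the case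
  a = 0, b = 1. Integrality is inherited from P(n+1), whose recurrence preserves integer
  coefficients, because dividing by u only shifts coefficients.\<close>

section \<open>Ascents and insertion of a new maximum\<close>

lemma ascents_Nil [simp]: "ascents [] = 0"
  by (simp add: ascents_def)

lemma ascents_singleton [simp]: "ascents [x] = 0"
  by (simp add: ascents_def)

lemma ascents_Cons_Cons:
  "ascents (x # y # zs) = (if x < y then 1 else 0) + ascents (y # zs)"
proof -
  let ?A = "{j. Suc j < length (y # zs) \<and> (y # zs) ! j < (y # zs) ! Suc j}"
  have "{j. Suc j < length (x # y # zs) \<and> (x # y # zs) ! j < (x # y # zs) ! Suc j}
      = (if x < y then {0} else {}) \<union> Suc ` ?A" (is "?L = ?R")
  proof (rule set_eqI)
    show "j \<in> ?L \<longleftrightarrow> j \<in> ?R" for j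
      by (cases j) auto
  qed
  moreover have "finite ?A"
    by (rule finite_subset[of _ "{..<length (y # zs)}"]) auto
  ultimately show ?thesis
    by (simp add: ascents_def card_image card_insert_if)
qed

lemma ascents_append:
  "ascents (xs @ ys) = ascents xs + ascents ys
     + (if xs \<noteq> [] \<and> ys \<noteq> [] \<and> last xs < hd ys then 1 else 0)"
proof (induction xs rule: induct_list012)
  case (2 x)
  then show ?case by (cases ys) (simp_all add: ascents_Cons_Cons)
qed (simp_all add: ascents_Cons_Cons)

lemma ascents_le_length: "ascents xs \<le> length xs"
proof -
  have "card {j. Suc j < length xs \<and> xs ! j < xs ! Suc j} \<le> card {..<length xs}"
    by (rule card_mono) auto
  then show ?thesis
    by (simp add: ascents_def)
qed

definition insert_at :: "nat \<Rightarrow> 'a \<Rightarrow> 'a list \<Rightarrow> 'a list" where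
  "insert_at i x xs = take i xs @ x # drop i xs"

text \<open>The positions at which inserting a new maximum creates an ascent: the end of the list and
  the gaps inside descents (but not the front).\<close>

definition rising_slots :: "nat list \<Rightarrow> nat set" where
  "rising_slots xs =
     {i. 0 < i \<and> i \<le> length xs \<and> \<not> (i < length xs \<and> xs ! (i - 1) < xs ! i)}"

lemma card_rising_slots: "card (rising_slots xs) = length xs - ascents xs"
proof -
  let ?A = "{j. Suc j < length xs \<and> xs ! j < xs ! Suc j}"
  have "rising_slots xs = {1..length xs} - Suc ` ?A" (is "?L = ?R")
  proof (rule set_eqI)
    show "i \<in> ?L \<longleftrightarrow> i \<in> ?R" for i
      by (cases i) (auto simp: rising_slots_def)
  qed
  moreover have "Suc ` ?A \<subseteq> {1..length xs}" "finite ?A"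
    by (auto intro: finite_subset[of _ "{..<length xs}"])
  ultimately show ?thesis
    by (simp add: card_Diff_subset card_image ascents_def)
qed

lemma ascents_insert_at_max:
  assumes "\<forall>v\<in>set xs. v < m" "i \<le> length xs"
  shows "ascents (insert_at i m xs) = ascents xs + (if i \<in> rising_slots xs then 1 else 0)"
proof -
  let ?as = "take i xs" and ?bs = "drop i xs"
  have small: "\<forall>v\<in>set ?as. v < m" "\<forall>v\<in>set ?bs. v < m"
    using assms(1) by (auto dest: in_set_takeD in_set_dropD)
  then have "ascents (m # ?bs) = ascents ?bs"
    by (cases ?bs) (auto simp: ascents_Cons_Cons)
  then have "ascents (insert_at i m xs) = ascents ?as + ascents ?bs + (if ?as \<noteq> [] then 1 else 0)"
    using small(1) ascents_append[of ?as "m # ?bs"] by (auto simp: insert_at_def)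
  moreover have "ascents xs = ascents ?as + ascents ?bs
      + (if ?as \<noteq> [] \<and> ?bs \<noteq> [] \<and> last ?as < hd ?bs then 1 else 0)"
    using ascents_append[of ?as ?bs] by simp
  moreover have "0 < i \<Longrightarrow> last ?as = xs ! (i - 1)"
    using assms(2) by (subst last_conv_nth) (auto simp: min_absorb1)
  then have "?as \<noteq> [] \<and> ?bs \<noteq> [] \<and> last ?as < hd ?bs
      \<longleftrightarrow> 0 < i \<and> i < length xs \<and> xs ! (i - 1) < xs ! i"
    using assms(2) by (auto simp: hd_drop_conv_nth)
  moreover have "?as \<noteq> [] \<longleftrightarrow> 0 < i"
    using assms(2) by auto
  ultimately show ?thesis
    using assms(2) by (simp add: rising_slots_def)
qed

lemma card_insert_at_max_ascents:
  assumes "\<forall>v\<in>set xs. v < m"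
  shows "card {i. i \<le> length xs \<and> ascents (insert_at i m xs) = k}
    = (if k = ascents xs then k + 1 else if k = ascents xs + 1 then length xs + 1 - k else 0)"
proof -
  have slots_le: "rising_slots xs \<subseteq> {..length xs}"
    by (auto simp: rising_slots_def)
  then have slots: "{i. i \<le> length xs \<and> ascents (insert_at i m xs) = k}
      = (if k = ascents xs then {..length xs} - rising_slots xs
         else if k = ascents xs + 1 then rising_slots xs else {})"
    using ascents_insert_at_max[OF assms] by (auto split: if_split_asm)
  from slots_le show ?thesis
    unfolding slots using ascents_le_length[of xs]
    by (simp add: card_Diff_subset card_rising_slots finite_subset)
qed

lemma insert_at_inject:
  assumes "x \<notin> set xs" "x \<notin> set ys" "i \<le> length xs" "j \<le> length ys"
    and "insert_at i x xs = insert_at j x ys"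
  shows "(xs, i) = (ys, j)"
proof -
  have "x \<notin> set (take i xs)" "x \<notin> set (drop i xs)"
    using assms(1,2) by (auto dest: in_set_takeD in_set_dropD)
  with assms(5) have "take i xs = take j ys" "drop i xs = drop j ys"
    by (auto simp: insert_at_def append_Cons_eq_iff)
  then show ?thesis
    using assms(3,4) by (metis append_take_drop_id length_take min_absorb2)
qed

lemma mset_insert_at: "mset (insert_at i x xs) = add_mset x (mset xs)"
  by (metis append_take_drop_id insert_at_def mset.simps(2) mset_append union_mset_add_mset_right)

lemma insert_at_in_permutations_of_set:
  assumes "xs \<in> permutations_of_set A" "x \<notin> A"
  shows "insert_at i x xs \<in> permutations_of_set (insert x A)"
proof
  show "set (insert_at i x xs) = insert x A"
    using permutations_of_setD(1)[OF assms(1)]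
    by (metis mset_insert_at set_mset_add_mset_insert set_mset_mset)
  show "distinct (insert_at i x xs)"
    using permutations_of_setD[OF assms(1)] assms(2) mset_eq_imp_distinct_iff[of "insert_at i x xs" "x # xs"]
    by (simp add: mset_insert_at)
qed

lemma bij_betw_insert_at_max:
  "bij_betw (\<lambda>(xs, i). insert_at i (Suc n) xs)
     (permutations_of_set {1..n} \<times> {..n}) (permutations_of_set {1..Suc n})"
  unfolding bij_betw_def
proof
  show "inj_on (\<lambda>(xs, i). insert_at i (Suc n) xs) (permutations_of_set {1..n} \<times> {..n})"
    (is "inj_on ?f ?A")
  proof (rule inj_onI)
    fix p q
    assume "p \<in> ?A" "q \<in> ?A" "?f p = ?f q"
    moreover obtain xs i ys j where "p = (xs, i)" "q = (ys, j)"
      by fastforce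
    ultimately show "p = q"
      using insert_at_inject[of "Suc n" xs ys i j] length_finite_permutations_of_set[of _ "{1..n}"]
      by (force simp: permutations_of_set_def)
  qed
  have insert_max: "insert (Suc n) {1..n} = {1..Suc n}"
    by auto
  show "?f ` ?A = permutations_of_set {1..Suc n}"
  proof
    show "?f ` ?A \<subseteq> permutations_of_set {1..Suc n}"
      using insert_at_in_permutations_of_set[of _ "{1..n}" "Suc n", unfolded insert_max] by auto
    show "permutations_of_set {1..Suc n} \<subseteq> ?f ` ?A"
    proof
      fix ys assume ys: "ys \<in> permutations_of_set {1..Suc n}"
      then have "Suc n \<in> set ys"
        by (simp add: permutations_of_set_def)
      then obtain as bs where ys_eq: "ys = as @ Suc n # bs"
        by (meson split_list)
      have "set (as @ bs) = {1..Suc n} - {Suc n}"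
        using permutations_of_setD[OF ys] unfolding ys_eq by auto
      then have "as @ bs \<in> permutations_of_set {1..n}"
        using permutations_of_setD(2)[OF ys] unfolding ys_eq by (intro permutations_of_setI) auto
      moreover from this have "length as \<le> n"
        by (auto dest: length_finite_permutations_of_set)
      ultimately show "ys \<in> ?f ` ?A"
        unfolding ys_eq by (intro image_eqI[of _ _ "(as @ bs, length as)"]) (auto simp: insert_at_def)
    qed
  qed
qed

lemma eulerian_eq_card: "eulerian n k = card {xs \<in> permutations_of_set {1..n}. ascents xs = k}"
  unfolding eulerian_def permutations_of_set_def by (rule arg_cong[where f = card]) auto

lemma eulerian_Suc:
  "eulerian (Suc n) k =
     (k + 1) * eulerian n k + (if k = 0 then 0 else (n + 1 - k) * eulerian n (k - 1))"
proof -
  let ?f = "\<lambda>(xs, i). insert_at i (Suc n) xs" and ?perms = "\<lambda>n. permutations_of_set {1..n}"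
  let ?slots = "\<lambda>xs. {i. i \<le> n \<and> ascents (insert_at i (Suc n) xs) = k}"
  have bij: "bij_betw ?f (?perms n \<times> {..n}) (?perms (Suc n))"
    by (rule bij_betw_insert_at_max)
  have "{ys \<in> ?perms (Suc n). ascents ys = k}
      = ?f ` {p \<in> ?perms n \<times> {..n}. ascents (?f p) = k}"
    unfolding bij_betw_imp_surj_on[OF bij, symmetric] by blast
  also have "{p \<in> ?perms n \<times> {..n}. ascents (?f p) = k} = (SIGMA xs:?perms n. ?slots xs)"
    by auto
  finally have "{ys \<in> ?perms (Suc n). ascents ys = k} = ?f ` (SIGMA xs:?perms n. ?slots xs)" .
  moreover have "inj_on ?f (SIGMA xs:?perms n. ?slots xs)"
    using bij_betw_imp_inj_on[OF bij] by (rule inj_on_subset) auto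
  ultimately have "eulerian (Suc n) k = (\<Sum>xs\<in>?perms n. card (?slots xs))"
    by (simp add: eulerian_eq_card card_image)
  also have "\<dots> = (\<Sum>xs\<in>?perms n. (if ascents xs = k then k + 1 else 0)
      + (if k \<noteq> 0 \<and> ascents xs = k - 1 then n + 1 - k else 0))"
  proof (rule sum.cong[OF refl])
    fix xs assume xs: "xs \<in> ?perms n"
    then have "\<forall>v\<in>set xs. v < Suc n" "length xs = n"
      by (auto dest: permutations_of_setD length_finite_permutations_of_set)
    then show "card (?slots xs) = (if ascents xs = k then k + 1 else 0)
        + (if k \<noteq> 0 \<and> ascents xs = k - 1 then n + 1 - k else 0)"
      using card_insert_at_max_ascents[of xs "Suc n" k] by auto
  qed
  also have "\<dots> = (k + 1) * eulerian n k + (if k = 0 then 0 else (n + 1 - k) * eulerian n (k - 1))"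
    by (simp add: sum.distrib eulerian_eq_card sum.inter_filter[symmetric])
  finally show ?thesis .
qed

lemma eulerian_0: "eulerian 0 k = (if k = 0 then 1 else 0)"
proof -
  have "{xs \<in> permutations_of_set {1..0}. ascents xs = k} = (if k = 0 then {[]} else {})"
    by auto
  then show ?thesis
    by (simp add: eulerian_eq_card)
qed

lemma eulerian_eq_0: "n < k \<Longrightarrow> eulerian n k = 0"
  by (induction n arbitrary: k) (simp_all add: eulerian_0 eulerian_Suc)

lemma eulerian_diag: "0 < n \<Longrightarrow> eulerian n n = 0"
  by (cases n) (simp_all add: eulerian_Suc eulerian_eq_0)

section \<open>Differential recurrences for the Eulerian and MacMahon polynomials\<close>

lemma pderiv_sum: "pderiv (\<Sum>k\<in>A. f k) = (\<Sum>k\<in>A. pderiv (f k))"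
  using higher_pderiv_sum[of 1 f A] by simp

lemma smult_sum_right: "smult c (\<Sum>k\<in>A. f k) = (\<Sum>k\<in>A. smult c (f k))"
  by (induction A rule: infinite_finite_induct) (simp_all add: smult_add_right)

lemma pderiv_monic_linear: "pderiv [:c, 1:] = 1"
  by (simp add: pderiv_pCons)

lemma mult_pderiv_power_mult_power:
  fixes x y :: "'a :: idom poly"
  assumes "pderiv x = 1" "pderiv y = 1"
  shows "x * y * pderiv (x ^ i * y ^ j)
    = smult (of_nat i) (x ^ i * y ^ Suc j) + smult (of_nat j) (x ^ Suc i * y ^ j)"
proof -
  have "x * y * pderiv (x ^ i * y ^ j)
      = smult (of_nat j) (x ^ Suc i * (y * y ^ (j - 1))) + smult (of_nat i) ((x * x ^ (i - 1)) * y ^ Suc j)"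
    by (simp add: pderiv_mult pderiv_power assms algebra_simps)
  also have "smult (of_nat j) (x ^ Suc i * (y * y ^ (j - 1))) = smult (of_nat j) (x ^ Suc i * y ^ j)"
    by (cases j) simp_all
  also have "smult (of_nat i) ((x * x ^ (i - 1)) * y ^ Suc j) = smult (of_nat i) (x ^ i * y ^ Suc j)"
    by (cases i) simp_all
  finally show ?thesis
    by simp
qed

lemma Ppoly_Suc:
  "Ppoly (Suc n) a b =
     (\<Sum>k\<le>n. smult (of_nat (eulerian n k)) ([:-a, 1:] ^ Suc k * [:-b, 1:] ^ (n - k)))"
proof (cases n)
  case 0
  then show ?thesis
    by (simp add: eulerian_0)
next
  case (Suc m)
  then show ?thesis
    by (simp add: atLeast0AtMost of_nat_poly mult.assoc eulerian_diag)
qed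

lemma Ppoly_Suc_Suc: "Ppoly (Suc (Suc n)) a b = [:-a, 1:] * [:-b, 1:] * pderiv (Ppoly (Suc n) a b)"
proof -
  let ?x = "[:-a, 1:] :: real poly" and ?y = "[:-b, 1:] :: real poly"
  let ?E = "\<lambda>n k. (of_nat (eulerian n k) :: real)"
  define f where "f k = smult (?E n k * of_nat (Suc k)) (?x ^ Suc k * ?y ^ (Suc n - k))" for k
  define g where "g k = smult (?E n k * of_nat (n - k)) (?x ^ Suc (Suc k) * ?y ^ (n - k))" for k
  have "?x * ?y * pderiv (Ppoly (Suc n) a b)
      = (\<Sum>k\<le>n. smult (?E n k) (?x * ?y * pderiv (?x ^ Suc k * ?y ^ (n - k))))"
    unfolding Ppoly_Suc pderiv_sum sum_distrib_left by (simp add: pderiv_smult)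
  also have "\<dots> = (\<Sum>k\<le>n. f k + g k)"
  proof (rule sum.cong[OF refl])
    fix k assume "k \<in> {..n}"
    then have "Suc (n - k) = Suc n - k"
      by auto
    then show "smult (?E n k) (?x * ?y * pderiv (?x ^ Suc k * ?y ^ (n - k))) = f k + g k"
      unfolding mult_pderiv_power_mult_power[OF pderiv_monic_linear pderiv_monic_linear] f_def g_def
      by (simp add: smult_add_right)
  qed
  also have "\<dots> = sum f {..Suc n} + sum g {..n}"
    using eulerian_eq_0[of n "Suc n"] by (simp add: sum.distrib f_def)
  also have "\<dots> = f 0 + (\<Sum>k\<le>n. f (Suc k)) + sum g {..n}"
    by (simp only: sum.atMost_Suc_shift)
  also have "\<dots> = Ppoly (Suc (Suc n)) a b"
  proof -
    have "smult (?E (Suc n) (Suc k)) (?x ^ Suc (Suc k) * ?y ^ (Suc n - Suc k)) = f (Suc k) + g k" for k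
    proof -
      have "eulerian (Suc n) (Suc k) = eulerian n (Suc k) * Suc (Suc k) + eulerian n k * (n - k)"
        by (simp add: eulerian_Suc)
      then have "?E (Suc n) (Suc k) = ?E n (Suc k) * of_nat (Suc (Suc k)) + ?E n k * of_nat (n - k)"
        by (simp only: of_nat_add of_nat_mult)
      then show ?thesis
        by (simp add: f_def g_def smult_add_left)
    qed
    moreover have "smult (?E (Suc n) 0) (?x ^ Suc 0 * ?y ^ (Suc n - 0)) = f 0"
      by (simp add: f_def eulerian_Suc)
    ultimately show ?thesis
      unfolding Ppoly_Suc[of "Suc n"] sum.atMost_Suc_shift by (simp only: add.assoc sum.distrib)
  qed
  finally show ?thesis ..
qed

lemma macmahon_0_right: "macmahon n 0 = 0"
  by (cases n) simp_all

lemma macmahon_eq_0: "n < k \<Longrightarrow> macmahon n k = 0"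
  by (cases n) simp_all

lemma macmahon_Suc_Suc:
  "j \<le> Suc n \<Longrightarrow> macmahon (Suc (Suc n)) (Suc j)
     = (2 * j + 1) * macmahon (Suc n) (Suc j) + (2 * n + 3 - 2 * j) * macmahon (Suc n) j"
proof (cases j)
  case 0
  then show ?thesis
    by (simp add: macmahon_0_right)
next
  case (Suc i)
  assume "j \<le> Suc n"
  with Suc show ?thesis
    by (simp add: algebra_simps)
qed

declare macmahon.simps [simp del]

lemma Qpoly_sum:
  "Qpoly n a b =
     (\<Sum>j\<le>n. smult (of_nat (macmahon (Suc n) (Suc j))) ([:-a, 1:] ^ (n - j) * [:-b, 1:] ^ j))"
  using sum.shift_bounds_cl_Suc_ivl[of "\<lambda>k. of_nat (macmahon (n + 1) k) * [:-a, 1:] ^ (n + 1 - k)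
      * [:-b, 1:] ^ (k - 1)" 0 n]
  by (simp add: Qpoly_def atLeast0AtMost of_nat_poly mult.assoc)

definition macmahon_op :: "'a :: idom poly \<Rightarrow> 'a poly \<Rightarrow> 'a poly \<Rightarrow> 'a poly" where
  "macmahon_op x y p = smult 2 (x * y * pderiv p) + (x + y) * p"

lemma macmahon_op_smult: "macmahon_op x y (smult c p) = smult c (macmahon_op x y p)"
  by (simp add: macmahon_op_def pderiv_smult smult_add_right mult.commute)

lemma macmahon_op_sum: "macmahon_op x y (\<Sum>k\<in>A. f k) = (\<Sum>k\<in>A. macmahon_op x y (f k))"
  unfolding macmahon_op_def pderiv_sum sum_distrib_left smult_sum_right sum.distrib ..

lemma macmahon_op_monomial:
  assumes "pderiv x = 1" "pderiv y = 1"
  shows "macmahon_op x y (x ^ i * y ^ j)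
     = smult (of_nat (2 * i + 1)) (x ^ i * y ^ Suc j) + smult (of_nat (2 * j + 1)) (x ^ Suc i * y ^ j)"
  unfolding macmahon_op_def mult_pderiv_power_mult_power[OF assms]
  by (simp add: algebra_simps smult_add_left smult_add_right)

lemma Qpoly_Suc: "Qpoly (Suc n) a b = macmahon_op [:-a, 1:] [:-b, 1:] (Qpoly n a b)"
proof -
  let ?x = "[:-a, 1:] :: real poly" and ?y = "[:-b, 1:] :: real poly"
  let ?M = "\<lambda>n j. (of_nat (macmahon n j) :: real)"
  define f where "f j = smult (?M (Suc n) (Suc j) * of_nat (2 * j + 1)) (?x ^ (Suc n - j) * ?y ^ j)" for j
  define h where "h j = smult (?M (Suc n) j * of_nat (2 * n + 3 - 2 * j)) (?x ^ (Suc n - j) * ?y ^ j)" for j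
  have "macmahon_op ?x ?y (Qpoly n a b)
      = (\<Sum>j\<le>n. smult (?M (Suc n) (Suc j)) (macmahon_op ?x ?y (?x ^ (n - j) * ?y ^ j)))"
    by (simp add: Qpoly_sum macmahon_op_sum macmahon_op_smult)
  also have "\<dots> = (\<Sum>j\<le>n. f j + h (Suc j))"
  proof (rule sum.cong[OF refl])
    fix j assume "j \<in> {..n}"
    then have "Suc (n - j) = Suc n - j" "2 * (n - j) + 1 = 2 * n + 3 - 2 * Suc j"
      by auto
    then show "smult (?M (Suc n) (Suc j)) (macmahon_op ?x ?y (?x ^ (n - j) * ?y ^ j)) = f j + h (Suc j)"
      unfolding macmahon_op_monomial[OF pderiv_monic_linear pderiv_monic_linear] f_def h_def
      by (simp add: smult_add_right add.commute)
  qed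
  also have "\<dots> = sum f {..Suc n} + (h 0 + (\<Sum>j\<le>n. h (Suc j)))"
    by (simp add: sum.distrib f_def h_def macmahon_eq_0 macmahon_0_right)
  also have "\<dots> = (\<Sum>j\<le>Suc n. f j + h j)"
    by (simp only: sum.atMost_Suc_shift[symmetric] sum.distrib)
  also have "\<dots> = Qpoly (Suc n) a b"
    unfolding Qpoly_sum[of "Suc n"]
  proof (rule sum.cong[OF refl])
    fix j assume "j \<in> {..Suc n}"
    then have "macmahon (Suc (Suc n)) (Suc j)
        = macmahon (Suc n) (Suc j) * (2 * j + 1) + macmahon (Suc n) j * (2 * n + 3 - 2 * j)"
      by (simp add: macmahon_Suc_Suc mult.commute)
    then have "?M (Suc (Suc n)) (Suc j)
        = ?M (Suc n) (Suc j) * of_nat (2 * j + 1) + ?M (Suc n) j * of_nat (2 * n + 3 - 2 * j)"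
      by (simp only: of_nat_add of_nat_mult)
    then show "f j + h j = smult (?M (Suc (Suc n)) (Suc j)) (?x ^ (Suc n - j) * ?y ^ j)"
      by (simp add: f_def h_def smult_add_left)
  qed
  finally show ?thesis ..
qed

section \<open>The binomial transform and the main identity\<close>

lemma Spoly_sum:
  "Spoly n a b d = (\<Sum>k\<le>n. smult (of_nat (n choose k) * (2 * d) ^ k) (Qpoly (n - k) a b))"
  unfolding Spoly_def atLeast0AtMost by (simp add: of_nat_poly mult.commute)

lemma Spoly_Suc:
  "Spoly (Suc n) a b d = macmahon_op [:-a, 1:] [:-b, 1:] (Spoly n a b d) + smult (2 * d) (Spoly n a b d)"
proof -
  let ?Q = "\<lambda>m. Qpoly m a b"
  define c where "c n k = of_nat (n choose k) * (2 * d) ^ k" for n k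
  have S: "Spoly m a b d = (\<Sum>k\<le>m. smult (c m k) (?Q (m - k)))" for m
    unfolding Spoly_sum c_def ..
  have "macmahon_op [:-a, 1:] [:-b, 1:] (Spoly n a b d) = (\<Sum>k\<le>n. smult (c n k) (?Q (Suc n - k)))"
    unfolding S macmahon_op_sum macmahon_op_smult Qpoly_Suc[symmetric]
    by (rule sum.cong[OF refl]) (simp add: Suc_diff_le)
  also have "\<dots> = (\<Sum>k\<le>Suc n. smult (c n k) (?Q (Suc n - k)))"
    by (simp add: c_def)
  also have "\<dots> = ?Q (Suc n) + (\<Sum>k\<le>n. smult (c n (Suc k)) (?Q (n - k)))"
    unfolding sum.atMost_Suc_shift by (simp add: c_def)
  finally have op: "macmahon_op [:-a, 1:] [:-b, 1:] (Spoly n a b d)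
      = ?Q (Suc n) + (\<Sum>k\<le>n. smult (c n (Suc k)) (?Q (n - k)))" .
  have "smult (2 * d) (Spoly n a b d) = (\<Sum>k\<le>n. smult (c n k * (2 * d)) (?Q (n - k)))"
    by (simp add: S smult_sum_right mult.commute)
  moreover have "c (Suc n) (Suc k) = c n (Suc k) + c n k * (2 * d)" for k
    by (simp add: c_def algebra_simps)
  moreover have "c (Suc n) 0 = 1"
    by (simp add: c_def)
  ultimately show ?thesis
    unfolding op S[of "Suc n"] sum.atMost_Suc_shift
    by (simp add: smult_add_left sum.distrib)
qed

lemma macmahon_op_add_smult_diff:
  fixes p :: "real poly"
  shows "smult (1 / 2) (macmahon_op [:-a, 1:] [:-b, 1:] p + smult (a - b) p)
     = [:-a, 1:] * [:-b, 1:] * pderiv p + [:-b, 1:] * p"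
proof -
  have "([:-a, 1:] + [:-b, 1:]) * p + smult (a - b) p = ([:-a, 1:] + [:-b, 1:] + [:a - b:]) * p"
    by (simp add: distrib_right smult_add_left[symmetric])
  also have "[:-a, 1:] + [:-b, 1:] + [:a - b:] = smult 2 [:-b, 1:]"
    by simp
  finally have shift: "([:-a, 1:] + [:-b, 1:]) * p + smult (a - b) p = smult 2 ([:-b, 1:] * p)"
    by (simp only: mult_smult_left)
  show ?thesis
    unfolding macmahon_op_def add.assoc shift smult_add_right[symmetric] by simp
qed

lemma Ppoly_Suc_eq_Spoly:
  "Ppoly (Suc n) a b = smult (1 / 2 ^ n) ([:-a, 1:] * Spoly n a b ((a - b) / 2))"
proof (induction n)
  case 0
  then show ?case
    by (simp add: Spoly_sum Qpoly_sum macmahon.simps)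
next
  case (Suc n)
  let ?x = "[:-a, 1:] :: real poly" and ?y = "[:-b, 1:] :: real poly"
  define T where "T = smult (1 / 2 ^ n) (Spoly n a b ((a - b) / 2))"
  have two: "2 * ((a - b) / 2) = a - b"
    by simp
  have "smult (1 / 2 ^ Suc n) (Spoly (Suc n) a b ((a - b) / 2))
      = smult (1 / 2) (smult (1 / 2 ^ n) (Spoly (Suc n) a b ((a - b) / 2)))"
    by simp
  also have "smult (1 / 2 ^ n) (Spoly (Suc n) a b ((a - b) / 2)) = macmahon_op ?x ?y T + smult (a - b) T"
    unfolding Spoly_Suc two T_def by (simp add: macmahon_op_smult smult_add_right)
  also have "smult (1 / 2) (macmahon_op ?x ?y T + smult (a - b) T) = ?x * ?y * pderiv T + ?y * T"
    by (rule macmahon_op_add_smult_diff)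
  finally have S_step:
    "smult (1 / 2 ^ Suc n) (Spoly (Suc n) a b ((a - b) / 2)) = ?x * ?y * pderiv T + ?y * T" .
  have "Ppoly (Suc n) a b = ?x * T"
    using Suc.IH by (simp only: T_def mult_smult_right)
  then have "Ppoly (Suc (Suc n)) a b = ?x * ?y * pderiv (?x * T)"
    by (simp only: Ppoly_Suc_Suc)
  also have "pderiv (?x * T) = T + ?x * pderiv T"
    by (simp only: pderiv_mult pderiv_monic_linear mult_1_right add.commute)
  also have "?x * ?y * (T + ?x * pderiv T) = ?x * (?x * ?y * pderiv T + ?y * T)"
    by (simp only: ring_distribs mult_ac add_ac)
  finally show ?case
    by (simp only: mult_smult_right[symmetric] S_step)
qed

lemma coeff_mult_in_Ints:
  fixes p q :: "'a :: comm_ring_1 poly"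
  assumes "\<And>i. coeff p i \<in> \<int>" "\<And>i. coeff q i \<in> \<int>"
  shows "coeff (p * q) i \<in> \<int>"
  using assms by (auto simp: coeff_mult intro!: Ints_sum Ints_mult)

lemma coeff_pderiv_in_Ints:
  fixes p :: "'a :: idom poly"
  assumes "\<And>i. coeff p i \<in> \<int>"
  shows "coeff (pderiv p) i \<in> \<int>"
  using assms by (simp add: coeff_pderiv Ints_mult)

lemma Ppoly_coeff_in_Ints:
  assumes "a \<in> \<int>" "b \<in> \<int>"
  shows "coeff (Ppoly (Suc n) a b) i \<in> \<int>"
proof (induction n arbitrary: i)
  have linear: "coeff [:-c, 1:] i \<in> \<int>" if "c \<in> \<int>" for c :: real and i
    using that by (simp add: coeff_pCons split: nat.split)
  {
    case 0
    show ?case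
      using linear[OF assms(1)] by simp
  next
    case (Suc n)
    then show ?case
      unfolding Ppoly_Suc_Suc
      by (intro coeff_mult_in_Ints coeff_pderiv_in_Ints linear assms)
  }
qed

theorem mainTheorem8:
  fixes n :: nat
  shows "Ppoly (n + 1) 0 1 = smult (1 / 2 ^ n) ([:0, 1:] * Spoly n 0 1 (-1/2))
    \<and> (\<forall>i. coeff (smult (1 / 2 ^ n) (Spoly n 0 1 (-1/2))) i \<in> \<int>)"
proof
  show identity: "Ppoly (n + 1) 0 1 = smult (1 / 2 ^ n) ([:0, 1:] * Spoly n 0 1 (-1/2))"
    using Ppoly_Suc_eq_Spoly[of n 0 1] by simp
  show "\<forall>i. coeff (smult (1 / 2 ^ n) (Spoly n 0 1 (-1/2))) i \<in> \<int>"
  proof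
    fix i
    have "coeff (smult (1 / 2 ^ n) (Spoly n 0 1 (-1/2))) i = coeff (Ppoly (Suc n) 0 1) (Suc i)"
      using identity by simp
    then show "coeff (smult (1 / 2 ^ n) (Spoly n 0 1 (-1/2))) i \<in> \<int>"
      using Ppoly_coeff_in_Ints[of 0 1 n "Suc i"] by simp
  qed
qed

end
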